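(* Let $f\in\mathbb{Z}_2[x]$, $n\ge2$, and let $\sigma$ be a cycle of $f_n$. If $\sigma$ strongly grows, then its (unique) lift strongly grows. If $\sigma$ weakly grows, then its lift strongly splits.
   Context: $f_n$ is the induced map on $\mathbb{Z}/2^n\mathbb{Z}$, $f_n(x\bmod 2^n)=f(x)\bmod 2^n$. A $k$-cycle of $f_n$ is a tuple $\sigma=(x_1,\dots,x_k)$ of distinct elements with $f_n(x_i)=x_{i+1}$, $f_n(x_k)=x_1$; its lifts are the cycles of $f_{n+1}$ in $\{y\in\mathbb{Z}/2^{n+1}\mathbb{Z}:y\bmod 2^n\in\sigma\}$. For $x\in\mathbb{Z}_2$ set $a_n(x)=(f^k)'(x)$ and $b_n(x)=(f^k(x)-x)/2^n$, evaluated at a representative $x\in\mathbb{Z}_2$ of a point of $\sigma$ (for lifts at level $n+1$ of length $k'$ use $a_{n+1}(x)=(f^{k'})'(x)$, $b_{n+1}(x)=(f^{k'}(x)-x)/2^{n+1}$). $\sigma$ strongly grows if $a_n\equiv1\pmod4$ and $b_n\equiv1\pmod2$; weakly grows if $a_n\equiv3\pmod4$ and $b_n\equiv1\pmod2$; strongly splits if $a_n\equiv1\pmod4$ and $b_n\equiv0\pmod2$; weakly splits if $a_n\equiv3\pmod4$ and $b_n\equiv0\pmod2$ (these conditions do not depend on the chosen representative). *)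

theory Defs
  imports "HOL-Computational_Algebra.Polynomial"
begin

text \<open>A 2-adic integer is represented by a sequence of integers x m that is
compatible (x (m+1) = x m mod 2^m); two sequences are identified when they agree
mod 2^m for every m.  This is the inverse limit of the rings Z/2^m Z.\<close>

definition z2_compat :: "(nat \<Rightarrow> int) \<Rightarrow> bool" where
  "z2_compat x \<longleftrightarrow> (\<forall>m. x (Suc m) mod 2 ^ m = x m mod 2 ^ m)"

definition z2_rel :: "(nat \<Rightarrow> int) \<Rightarrow> (nat \<Rightarrow> int) \<Rightarrow> bool" where
  "z2_rel x y \<longleftrightarrow> z2_compat x \<and> z2_compat y \<and> (\<forall>m. x m mod 2 ^ m = y m mod 2 ^ m)"

lemma z2_compat_const: "z2_compat (\<lambda>_. c)"
  by (simp add: z2_compat_def)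

lemma z2_compat_add: "z2_compat x \<Longrightarrow> z2_compat y \<Longrightarrow> z2_compat (\<lambda>m. x m + y m)"
  unfolding z2_compat_def by (metis mod_add_cong)

lemma z2_compat_mult: "z2_compat x \<Longrightarrow> z2_compat y \<Longrightarrow> z2_compat (\<lambda>m. x m * y m)"
  unfolding z2_compat_def by (metis mod_mult_cong)

lemma z2_compat_uminus: "z2_compat x \<Longrightarrow> z2_compat (\<lambda>m. - x m)"
  unfolding z2_compat_def by (metis mod_minus_cong)

lemma z2_compat_diff: "z2_compat x \<Longrightarrow> z2_compat y \<Longrightarrow> z2_compat (\<lambda>m. x m - y m)"
  unfolding z2_compat_def by (metis mod_diff_cong)

lemma z2_rel_refl: "z2_compat x \<Longrightarrow> (\<And>m. x m = y m) \<Longrightarrow> z2_rel x y"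
  unfolding z2_rel_def
proof -
  assume a: "z2_compat x" and b: "\<And>m. x m = y m"
  have "y = x" using b by auto
  then show "z2_compat x \<and> z2_compat y \<and> (\<forall>m. x m mod 2 ^ m = y m mod 2 ^ m)"
    using a by simp
qed

lemma z2_part_equivp: "part_equivp z2_rel"
proof (rule part_equivpI)
  show "\<exists>x. z2_rel x x" by (rule exI[of _ "\<lambda>_. 0"]) (simp add: z2_rel_def z2_compat_def)
  show "symp z2_rel" by (rule sympI) (auto simp: z2_rel_def)
  show "transp z2_rel" by (rule transpI) (auto simp: z2_rel_def)
qed

quotient_type z2 = "nat \<Rightarrow> int" / partial: z2_rel
  by (rule z2_part_equivp)

instantiation z2 :: comm_ring_1
begin

lift_definition zero_z2 :: z2 is "\<lambda>_. 0" by (simp add: z2_rel_def z2_compat_def)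
lift_definition one_z2 :: z2 is "\<lambda>_. 1" by (simp add: z2_rel_def z2_compat_def)
lift_definition plus_z2 :: "z2 \<Rightarrow> z2 \<Rightarrow> z2" is "\<lambda>x y m. x m + y m"
  unfolding z2_rel_def by (auto intro: z2_compat_add mod_add_cong)
lift_definition times_z2 :: "z2 \<Rightarrow> z2 \<Rightarrow> z2" is "\<lambda>x y m. x m * y m"
  unfolding z2_rel_def by (auto intro: z2_compat_mult mod_mult_cong)
lift_definition uminus_z2 :: "z2 \<Rightarrow> z2" is "\<lambda>x m. - x m"
  unfolding z2_rel_def by (auto intro: z2_compat_uminus mod_minus_cong)
lift_definition minus_z2 :: "z2 \<Rightarrow> z2 \<Rightarrow> z2" is "\<lambda>x y m. x m - y m"
  unfolding z2_rel_def by (auto intro: z2_compat_diff mod_diff_cong)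

lemma z2_rel_same: "z2_compat x \<Longrightarrow> z2_rel x x"
  by (simp add: z2_rel_def)

instance
proof
  fix a b c :: z2
  show "a + b + c = a + (b + c)"
    by transfer (rule z2_rel_refl, intro z2_compat_add, auto simp: z2_rel_def)
  show "a + b = b + a"
    by transfer (rule z2_rel_refl, intro z2_compat_add, auto simp: z2_rel_def)
  show "0 + a = a"
    by transfer (rule z2_rel_refl, intro z2_compat_add z2_compat_const, auto simp: z2_rel_def)
  show "- a + a = 0"
    by transfer (rule z2_rel_refl, intro z2_compat_add z2_compat_uminus, auto simp: z2_rel_def)
  show "a - b = a + - b"
    by transfer (rule z2_rel_refl, intro z2_compat_diff, auto simp: z2_rel_def)
  show "a * b * c = a * (b * c)"
    by transfer (rule z2_rel_refl, intro z2_compat_mult, auto simp: z2_rel_def)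
  show "a * b = b * a"
    by transfer (rule z2_rel_refl, intro z2_compat_mult, auto simp: z2_rel_def)
  show "1 * a = a"
    by transfer (rule z2_rel_refl, intro z2_compat_mult z2_compat_const, auto simp: z2_rel_def)
  show "(a + b) * c = a * c + b * c"
    by transfer (rule z2_rel_refl, intro z2_compat_mult z2_compat_add, auto simp: z2_rel_def algebra_simps)
  show "(0::z2) \<noteq> 1"
    by transfer (auto simp: z2_rel_def dest: spec[of _ 1])
qed

end

text \<open>Reduction Z_2 \<rightarrow> Z/2^n Z; residues mod 2^n are represented by the integers 0..<2^n.\<close>

lift_definition red :: "nat \<Rightarrow> z2 \<Rightarrow> int" is "\<lambda>n x. x n mod 2 ^ n"
  by (simp add: z2_rel_def)

definition fn_map :: "z2 poly \<Rightarrow> nat \<Rightarrow> int \<Rightarrow> int" where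
  "fn_map f n r = red n (poly f (of_int r))"

definition is_cycle :: "z2 poly \<Rightarrow> nat \<Rightarrow> int list \<Rightarrow> bool" where
  "is_cycle f n \<sigma> \<longleftrightarrow> \<sigma> \<noteq> [] \<and> distinct \<sigma> \<and> set \<sigma> \<subseteq> {0..<2 ^ n} \<and>
     (\<forall>i < length \<sigma>. fn_map f n (\<sigma> ! i) = \<sigma> ! ((i + 1) mod length \<sigma>))"

definition is_lift :: "z2 poly \<Rightarrow> nat \<Rightarrow> int list \<Rightarrow> int list \<Rightarrow> bool" where
  "is_lift f n \<sigma> \<tau> \<longleftrightarrow> is_cycle f (Suc n) \<tau> \<and> (\<forall>y \<in> set \<tau>. y mod 2 ^ n \<in> set \<sigma>)"

definition iter_poly :: "z2 poly \<Rightarrow> nat \<Rightarrow> z2 poly" where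
  "iter_poly f k = ((\<lambda>g. pcompose f g) ^^ k) [:0, 1:]"

definition deriv_at :: "z2 poly \<Rightarrow> z2 \<Rightarrow> z2" where
  "deriv_at p x = (\<Sum>i = 1..degree p. of_nat i * coeff p i * x ^ (i - 1))"

definition a_val :: "z2 poly \<Rightarrow> nat \<Rightarrow> z2 \<Rightarrow> z2" where
  "a_val f k x = deriv_at (iter_poly f k) x"

definition b_val :: "z2 poly \<Rightarrow> nat \<Rightarrow> nat \<Rightarrow> z2 \<Rightarrow> z2" where
  "b_val f n k x = (THE y. 2 ^ n * y = poly (iter_poly f k) x - x)"

definition strongly_grows :: "z2 poly \<Rightarrow> nat \<Rightarrow> int list \<Rightarrow> bool" where
  "strongly_grows f n \<sigma> \<longleftrightarrow> (\<forall>x. red n x \<in> set \<sigma> \<longrightarrow>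
     (4::z2) dvd a_val f (length \<sigma>) x - 1 \<and> \<not> (2::z2) dvd b_val f n (length \<sigma>) x)"

definition weakly_grows :: "z2 poly \<Rightarrow> nat \<Rightarrow> int list \<Rightarrow> bool" where
  "weakly_grows f n \<sigma> \<longleftrightarrow> (\<forall>x. red n x \<in> set \<sigma> \<longrightarrow>
     (4::z2) dvd a_val f (length \<sigma>) x - 3 \<and> \<not> (2::z2) dvd b_val f n (length \<sigma>) x)"

definition strongly_splits :: "z2 poly \<Rightarrow> nat \<Rightarrow> int list \<Rightarrow> bool" where
  "strongly_splits f n \<sigma> \<longleftrightarrow> (\<forall>x. red n x \<in> set \<sigma> \<longrightarrow>
     (4::z2) dvd a_val f (length \<sigma>) x - 1 \<and> (2::z2) dvd b_val f n (length \<sigma>) x)"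

definition weakly_splits :: "z2 poly \<Rightarrow> nat \<Rightarrow> int list \<Rightarrow> bool" where
  "weakly_splits f n \<sigma> \<longleftrightarrow> (\<forall>x. red n x \<in> set \<sigma> \<longrightarrow>
     (4::z2) dvd a_val f (length \<sigma>) x - 3 \<and> (2::z2) dvd b_val f n (length \<sigma>) x)"

end

theory Submission
  imports Defs
begin

text \<open>Let \<open>k = |\<sigma>|\<close>, \<open>a = (f^k)'(x)\<close> and \<open>f^k(x) - x = 2^n b\<close>. If \<open>b\<close> is odd, then
  \<open>f_{n+1}^k\<close> fixes no point above \<open>\<sigma>\<close>; as it preserves each of the two-point fibres of
  \<open>\<int>/2^{n+1} \<rightarrow> \<int>/2^n\<close> over \<open>\<sigma>\<close>, it swaps them, so the \<open>2k\<close> points above \<open>\<sigma>\<close> form one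
  cycle, which is then the unique lift. A second-order Taylor expansion of \<open>f^k\<close> at \<open>x\<close> gives
  \<open>f^{2k}(x) - x \<equiv> 2^n b (1 + a) (mod 2^{2n})\<close>, and \<open>(f^{2k})'(x) = (f^k)'(f^k x) a \<equiv> a^2 (mod 4)\<close>
  because \<open>4 | f^k(x) - x\<close>. Hence for \<open>n \<ge> 2\<close> the lift has \<open>a' \<equiv> 1 (mod 4)\<close> and
  \<open>b' \<equiv> b (1 + a) / 2 (mod 2)\<close>, which is odd for \<open>a \<equiv> 1\<close> and even for \<open>a \<equiv> 3 (mod 4)\<close>.\<close>

lemma z2_compat_mod_le:
  assumes "z2_compat x" "m \<le> n"
  shows "x n mod 2 ^ m = x m mod 2 ^ m"
  using assms(2)
proof (induction n rule: dec_induct)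
  case (step n)
  have "(2::int) ^ m dvd 2 ^ n" using step.hyps(1) by (simp add: le_imp_power_dvd)
  then have "x (Suc n) mod 2 ^ m = x (Suc n) mod 2 ^ n mod 2 ^ m"
    by (simp add: mod_mod_cancel)
  also have "\<dots> = x n mod 2 ^ n mod 2 ^ m" using assms(1) by (simp add: z2_compat_def)
  also have "\<dots> = x n mod 2 ^ m" using \<open>2 ^ m dvd 2 ^ n\<close> by (simp add: mod_mod_cancel)
  finally show ?case using step.IH by simp
qed simp

lemma red_add: "red n (x + y) = (red n x + red n y) mod 2 ^ n"
  by transfer (simp add: mod_add_eq)

lemma red_mult: "red n (x * y) = (red n x * red n y) mod 2 ^ n"
  by transfer (simp add: mod_mult_eq)

lemma red_diff: "red n (x - y) = (red n x - red n y) mod 2 ^ n"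
  by transfer (simp add: mod_diff_eq)

lemma red_one: "red n 1 = 1 mod 2 ^ n"
  by transfer simp

lemma red_zero: "red n 0 = 0"
  by transfer simp

lemma red_bounds: "0 \<le> red n x" "red n x < 2 ^ n"
  by (transfer, simp)+

lemma red_mod: "red n x mod 2 ^ n = red n x"
  using red_bounds by simp

lemma red_mod_le: "m \<le> n \<Longrightarrow> red n x mod 2 ^ m = red m x"
proof transfer
  fix m n :: nat and x :: "nat \<Rightarrow> int"
  assume "m \<le> n" "z2_rel x x"
  then have "z2_compat x" by (simp add: z2_rel_def)
  have "(2::int) ^ m dvd 2 ^ n" using \<open>m \<le> n\<close> by (simp add: le_imp_power_dvd)
  then have "x n mod 2 ^ n mod 2 ^ m = x n mod 2 ^ m" by (simp add: mod_mod_cancel)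
  then show "x n mod 2 ^ n mod 2 ^ m = x m mod 2 ^ m"
    using z2_compat_mod_le[OF \<open>z2_compat x\<close> \<open>m \<le> n\<close>] by simp
qed

lemma red_of_int: "red n (of_int c) = c mod 2 ^ n"
proof (induction c rule: int_induct[where k = 0])
  case (step1 i)
  then show ?case by (simp add: red_add red_one mod_add_left_eq)
next
  case (step2 i)
  then show ?case by (simp add: red_diff red_one mod_diff_left_eq)
qed (simp add: red_zero)

lemma z2_eqI_red: "(\<And>m. red m x = red m y) \<Longrightarrow> x = y"
  by transfer (simp add: z2_rel_def)

text \<open>Exact division by \<open>2 ^ n\<close>, meaningful when \<open>red n x = 0\<close>.\<close>
lift_definition z2_div_pow2 :: "nat \<Rightarrow> z2 \<Rightarrow> z2" is "\<lambda>n x m. x (m + n) div 2 ^ n"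
proof -
  fix n :: nat and x y :: "nat \<Rightarrow> int"
  assume r: "z2_rel x y"
  have shift: "a mod 2 ^ (m + n) = b mod 2 ^ (m + n) \<Longrightarrow> a div 2 ^ n mod 2 ^ m = b div 2 ^ n mod 2 ^ m"
    for a b :: int and m
    by (simp add: div_exp_mod_exp_eq add.commute)
  have compat: "z2_compat (\<lambda>m. z (m + n) div 2 ^ n)" if "z2_compat z" for z
    unfolding z2_compat_def
    using z2_compat_mod_le[OF that, of "m + n" "Suc m + n" for m] by (auto intro: shift)
  show "z2_rel (\<lambda>m. x (m + n) div 2 ^ n) (\<lambda>m. y (m + n) div 2 ^ n)"
    using r unfolding z2_rel_def by (auto intro: compat shift)
qed

lemma red_z2_div_pow2: "red m (z2_div_pow2 n x) = red (m + n) x div 2 ^ n"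
  by transfer (simp add: div_exp_mod_exp_eq add.commute)

lemma red_pow2: "red m (2 ^ n) = 2 ^ n mod 2 ^ m"
  using red_of_int[of m "2 ^ n"] by simp

lemma red_pow2_mult: "red (m + n) (2 ^ n * x) = 2 ^ n * red m x"
proof -
  have "red (m + n) (2 ^ n * x) = red (m + n) x * 2 ^ n mod 2 ^ (m + n)"
    by (simp add: red_mult red_pow2 power_add mult.commute)
  also have "\<dots> = red (m + n) x mod 2 ^ m * 2 ^ n"
    by (simp add: mult_exp_mod_exp_eq)
  finally show ?thesis by (simp add: red_mod_le)
qed

lemma pow2_mult_cancel:
  assumes "(2::z2) ^ n * y = 2 ^ n * z"
  shows "y = z"
proof (rule z2_eqI_red)
  fix m
  have "(2::int) ^ n * red m y = 2 ^ n * red m z"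
    using arg_cong[OF assms, of "red (m + n)"] by (simp add: red_pow2_mult)
  then show "red m y = red m z" by simp
qed

lemma pow2_dvd_iff_red_eq_0: "(2::z2) ^ n dvd x \<longleftrightarrow> red n x = 0"
proof
  assume "2 ^ n dvd x"
  then obtain y where "x = 2 ^ n * y" by (auto simp: dvd_def)
  then show "red n x = 0" using red_pow2_mult[of 0 n y] red_bounds[of 0 y] by simp
next
  assume "red n x = 0"
  have "x = 2 ^ n * z2_div_pow2 n x"
  proof (rule z2_eqI_red)
    fix m
    have "red (m + n) x mod 2 ^ n = 0" using \<open>red n x = 0\<close> by (simp add: red_mod_le)
    then have "2 ^ n * (red (m + n) x div 2 ^ n) = red (m + n) x"
      by (metis add.right_neutral div_mult_mod_eq mult.commute)
    then have "red (m + n) x = red (m + n) (2 ^ n * z2_div_pow2 n x)"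
      by (simp add: red_pow2_mult red_z2_div_pow2 red_mod_le)
    then show "red m x = red m (2 ^ n * z2_div_pow2 n x)"
      by (metis le_add1 red_mod_le)
  qed
  then show "2 ^ n dvd x" by (metis dvd_triv_left)
qed

lemma red_eq_iff_pow2_dvd: "red n x = red n y \<longleftrightarrow> (2::z2) ^ n dvd x - y"
proof -
  have "red n x = red n y \<longleftrightarrow> (red n x - red n y) mod 2 ^ n = 0"
    by (metis mod_eq_dvd_iff dvd_eq_mod_eq_0 red_mod)
  then show ?thesis by (simp add: pow2_dvd_iff_red_eq_0 red_diff)
qed

lemma two_dvd_iff_red1: "(2::z2) dvd x \<longleftrightarrow> red 1 x = 0"
  using pow2_dvd_iff_red_eq_0[of 1 x] by simp

lemma red1_cases: "red 1 x = 0 \<or> red 1 x = 1"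
  using red_bounds[of 1 x] by auto

lemma two_dvd_mult_iff: "(2::z2) dvd x * y \<longleftrightarrow> 2 dvd x \<or> 2 dvd y"
  using red1_cases[of x] red1_cases[of y] by (auto simp: two_dvd_iff_red1 red_mult)

lemma not_two_dvd_one: "\<not> (2::z2) dvd 1"
  by (simp add: two_dvd_iff_red1 red_one)

lemma z2_eq_pow2_mult_odd:
  assumes "(x::z2) \<noteq> 0"
  obtains v u where "x = 2 ^ v * u" "\<not> 2 dvd u"
proof -
  have "\<exists>m. \<not> (2::z2) ^ m dvd x"
  proof (rule ccontr)
    assume "\<nexists>m. \<not> (2::z2) ^ m dvd x"
    then have "red m x = red m 0" for m
      by (simp add: pow2_dvd_iff_red_eq_0 red_zero)
    then show False using assms z2_eqI_red by blast
  qed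
  define M where "M = (LEAST m. \<not> (2::z2) ^ m dvd x)"
  have M: "\<not> (2::z2) ^ M dvd x" "\<And>m. m < M \<Longrightarrow> 2 ^ m dvd x"
    unfolding M_def using LeastI_ex[OF \<open>\<exists>m. _\<close>] not_less_Least by auto
  have "M \<noteq> 0" using M(1) by (intro notI) simp
  then obtain v where v: "M = Suc v" using not0_implies_Suc by blast
  then have "2 ^ v dvd x" using M(2) by simp
  then obtain u where u: "x = 2 ^ v * u" by (rule dvdE)
  have "\<not> 2 dvd u"
  proof
    assume "2 dvd u"
    then obtain w where "u = 2 * w" by (rule dvdE)
    then have "x = 2 ^ M * w" using u v by (simp add: mult.assoc)
    with M(1) show False by simp
  qed
  with u show ?thesis by (rule that)
qed

instance z2 :: idom
proof
  fix a b :: z2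
  assume "a \<noteq> 0" "b \<noteq> 0"
  then obtain v u v' u' where "a = 2 ^ v * u" "\<not> 2 dvd u" "b = 2 ^ v' * u'" "\<not> 2 dvd u'"
    by (metis z2_eq_pow2_mult_odd)
  then have ab: "a * b = 2 ^ (v + v') * (u * u')" and "\<not> 2 dvd u * u'"
    by (simp_all add: power_add ac_simps two_dvd_mult_iff)
  then have "u * u' \<noteq> 0" by auto
  with ab show "a * b \<noteq> 0" by (metis mult_zero_right pow2_mult_cancel)
qed

lemma sub_dvd_poly_diff: "x - y dvd poly p x - poly p y" for x y :: "'a::comm_ring_1"
proof (induction p)
  case (pCons a p)
  then obtain c where c: "poly p x - poly p y = (x - y) * c" by (auto simp: dvd_def)
  have "poly (pCons a p) x - poly (pCons a p) y = x * (poly p x - poly p y) + (x - y) * poly p y"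
    by (simp add: algebra_simps)
  also have "\<dots> = (x - y) * (x * c + poly p y)"
    by (simp add: c algebra_simps)
  finally show ?case by simp
qed simp

lemma poly_add_second_order:
  "\<exists>c. poly p (x + h) = poly p x + h * poly (pderiv p) x + h ^ 2 * c" for x h :: "'a::idom"
proof (induction p)
  case (pCons a q)
  then obtain c where c: "poly q (x + h) = poly q x + h * poly (pderiv q) x + h ^ 2 * c" by blast
  have "poly (pCons a q) (x + h) = a + (x + h) * (poly q x + h * poly (pderiv q) x + h ^ 2 * c)"
    by (simp only: poly_pCons c)
  also have "\<dots> = poly (pCons a q) x + h * poly (pderiv (pCons a q)) x
      + h ^ 2 * (poly (pderiv q) x + (x + h) * c)"
    by (simp add: pderiv_pCons power2_eq_square algebra_simps)
  finally show ?case by blast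
qed simp

lemma deriv_at_eq_poly_pderiv: "deriv_at p x = poly (pderiv p) x"
proof (cases "degree p")
  case 0
  have "pderiv p = 0"
    by (rule poly_eqI) (simp add: coeff_pderiv coeff_eq_0 0)
  with 0 show ?thesis by (simp add: deriv_at_def)
next
  case (Suc d)
  have "degree (pderiv p) \<le> d"
    by (rule degree_le) (use Suc in \<open>auto simp: coeff_pderiv coeff_eq_0\<close>)
  then have "poly (pderiv p) x = (\<Sum>i\<le>d. coeff (pderiv p) i * x ^ i)"
    unfolding poly_altdef by (intro sum.mono_neutral_left) (auto simp: coeff_eq_0)
  also have "\<dots> = (\<Sum>i=0..d. of_nat (Suc i) * coeff p (Suc i) * x ^ i)"
    by (simp add: coeff_pderiv atLeast0AtMost)
  also have "\<dots> = (\<Sum>i=Suc 0..Suc d. of_nat i * coeff p i * x ^ (i - 1))"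
    by (subst sum.atLeast_Suc_atMost_Suc_shift) simp
  finally show ?thesis using Suc by (simp add: deriv_at_def)
qed

lemma iter_poly_add: "iter_poly f (a + b) = pcompose (iter_poly f a) (iter_poly f b)"
proof (induction a)
  case 0
  then show ?case by (simp add: iter_poly_def pcompose_pCons)
next
  case (Suc a)
  then show ?case by (simp add: iter_poly_def pcompose_assoc)
qed

lemma poly_iter_poly: "poly (iter_poly f k) x = (poly f ^^ k) x"
  by (induction k) (simp_all add: iter_poly_def poly_pcompose)

lemma red_poly: "red m (poly f x) = fn_map f m (red m x)"
proof -
  have "(2::z2) ^ m dvd x - of_int (red m x)"
    by (simp add: red_eq_iff_pow2_dvd[symmetric] red_of_int red_mod)
  then have "(2::z2) ^ m dvd poly f x - poly f (of_int (red m x))"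
    using sub_dvd_poly_diff dvd_trans by blast
  then show ?thesis by (simp add: fn_map_def red_eq_iff_pow2_dvd)
qed

lemma red_poly_iter_poly: "red m (poly (iter_poly f k) x) = (fn_map f m ^^ k) (red m x)"
  by (induction k) (simp_all add: poly_iter_poly red_poly)

lemma fn_map_bounds: "0 \<le> fn_map f m r" "fn_map f m r < 2 ^ m"
  by (simp_all add: fn_map_def red_bounds)

lemma funpow_fn_map_mod:
  assumes "m \<le> n"
  shows "(fn_map f n ^^ j) r mod 2 ^ m = (fn_map f m ^^ j) (r mod 2 ^ m)"
proof (induction j)
  case (Suc j)
  have "fn_map f n s mod 2 ^ m = fn_map f m (s mod 2 ^ m)" for s
  proof -
    have "fn_map f n s mod 2 ^ m = red m (poly f (of_int s))"
      unfolding fn_map_def using assms by (rule red_mod_le)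
    then show ?thesis by (simp only: red_poly red_of_int)
  qed
  with Suc show ?case by simp
qed simp

lemma cycle_length_pos: "is_cycle f n \<sigma> \<Longrightarrow> 0 < length \<sigma>"
  by (simp add: is_cycle_def)

lemma cycle_nth_bounds:
  assumes "is_cycle f n \<sigma>" "i < length \<sigma>"
  shows "0 \<le> \<sigma> ! i" "\<sigma> ! i < 2 ^ n"
proof -
  have "\<sigma> ! i \<in> set \<sigma>" using assms(2) by (rule nth_mem)
  with assms(1) have "\<sigma> ! i \<in> {0..<2 ^ n}" by (auto simp: is_cycle_def)
  then show "0 \<le> \<sigma> ! i" "\<sigma> ! i < 2 ^ n" by simp_all
qed

lemma cycle_funpow_nth:
  assumes "is_cycle f n \<sigma>"
  shows "(fn_map f n ^^ j) (\<sigma> ! 0) = \<sigma> ! (j mod length \<sigma>)"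
proof (induction j)
  case (Suc j)
  have "length \<sigma> > 0" using assms by (simp add: is_cycle_def)
  with Suc assms show ?case by (simp add: is_cycle_def mod_Suc_eq)
qed simp

lemma cycle_funpow_length:
  assumes "is_cycle f n \<sigma>" "r \<in> set \<sigma>"
  shows "(fn_map f n ^^ length \<sigma>) r = r"
proof -
  obtain i where i: "i < length \<sigma>" "r = \<sigma> ! i" using assms(2) by (auto simp: in_set_conv_nth)
  have "(fn_map f n ^^ length \<sigma>) r = (fn_map f n ^^ (length \<sigma> + i)) (\<sigma> ! 0)"
    using i cycle_funpow_nth[OF assms(1), of i] by (simp add: funpow_add)
  also have "\<dots> = r" using i cycle_funpow_nth[OF assms(1)] by simp
  finally show ?thesis .
qed

lemma cycle_fn_map_closed:
  assumes "is_cycle f n \<sigma>" "r \<in> set \<sigma>"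
  shows "fn_map f n r \<in> set \<sigma>"
proof -
  obtain i where "i < length \<sigma>" "r = \<sigma> ! i" using assms(2) by (auto simp: in_set_conv_nth)
  with assms(1) show ?thesis by (auto simp: is_cycle_def)
qed

lemma b_val_eqI: "poly (iter_poly f k) x - x = 2 ^ n * b \<Longrightarrow> b_val f n k x = b"
  unfolding b_val_def by (rule the_equality) (auto intro: pow2_mult_cancel)

lemma cycle_displacement:
  assumes "is_cycle f n \<sigma>" "red n x \<in> set \<sigma>"
  shows "poly (iter_poly f (length \<sigma>)) x - x = 2 ^ n * b_val f n (length \<sigma>) x"
proof -
  have "red n (poly (iter_poly f (length \<sigma>)) x) = red n x"
    using assms by (simp add: red_poly_iter_poly cycle_funpow_length)
  then obtain b where b: "poly (iter_poly f (length \<sigma>)) x - x = 2 ^ n * b"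
    by (auto simp: red_eq_iff_pow2_dvd dvd_def)
  then have "b_val f n (length \<sigma>) x = b" by (rule b_val_eqI)
  with b show ?thesis by simp
qed

lemma int_cases_mod_double:
  fixes y M :: int
  assumes "0 \<le> y" "y < 2 * M"
  shows "y = y mod M \<or> y = y mod M + M"
proof (cases "y < M")
  case False
  then have "(y - M) mod M = y - M" using assms by (intro mod_pos_pos_trivial) auto
  then show ?thesis by (simp add: mod_diff_right_eq[symmetric])
qed (use assms in simp)

lemma nat_mod_eq_less_double:
  fixes i j k :: nat
  assumes "i < j" "j < 2 * k" "i mod k = j mod k"
  shows "j = i + k"
proof -
  obtain q where q: "j - i = k * q" using assms(1,3) mod_eq_dvd_iff_nat[of i j k] by (auto simp: dvd_def)
  have "k * q < k * 2" using q assms(1,2) by linarith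
  then have "q < 2" by simp
  moreover have "q \<noteq> 0" using q assms(1) by (intro notI) simp
  ultimately have "q = 1" by simp
  then show ?thesis using q assms(1) by simp
qed

definition grows :: "z2 poly \<Rightarrow> nat \<Rightarrow> int list \<Rightarrow> bool" where
  "grows f n \<sigma> \<longleftrightarrow> (\<forall>x. red n x \<in> set \<sigma> \<longrightarrow> \<not> (2::z2) dvd b_val f n (length \<sigma>) x)"

definition lift_point :: "z2 poly \<Rightarrow> nat \<Rightarrow> int list \<Rightarrow> nat \<Rightarrow> int" where
  "lift_point f n \<sigma> j = (fn_map f (Suc n) ^^ j) (\<sigma> ! 0)"

definition lift_orbit :: "z2 poly \<Rightarrow> nat \<Rightarrow> int list \<Rightarrow> int list" where
  "lift_orbit f n \<sigma> = map (lift_point f n \<sigma>) [0..<2 * length \<sigma>]"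

lemma grows_funpow_length_no_fixpoint:
  assumes grows: "grows f n \<sigma>"
    and "0 \<le> t" "t < 2 ^ Suc n" "t mod 2 ^ n \<in> set \<sigma>"
  shows "(fn_map f (Suc n) ^^ length \<sigma>) t \<noteq> t"
proof
  assume fixed: "(fn_map f (Suc n) ^^ length \<sigma>) t = t"
  define x :: z2 where "x = of_int t"
  have "red (Suc n) x = t" using assms by (simp add: x_def red_of_int)
  moreover have x_mem: "red n x \<in> set \<sigma>" using assms by (simp add: x_def red_of_int)
  ultimately have "red (Suc n) (poly (iter_poly f (length \<sigma>)) x) = red (Suc n) x"
    using fixed by (simp add: red_poly_iter_poly)
  then have "2 ^ Suc n dvd poly (iter_poly f (length \<sigma>)) x - x" by (simp only: red_eq_iff_pow2_dvd)
  then obtain q where "poly (iter_poly f (length \<sigma>)) x - x = 2 ^ Suc n * q" by (rule dvdE)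
  then have "poly (iter_poly f (length \<sigma>)) x - x = 2 ^ n * (2 * q)" by (simp add: mult.assoc)
  then have "b_val f n (length \<sigma>) x = 2 * q" by (rule b_val_eqI)
  with grows x_mem show False unfolding grows_def by (metis dvd_triv_left)
qed

lemma funpow_lift_point: "(fn_map f (Suc n) ^^ i) (lift_point f n \<sigma> j) = lift_point f n \<sigma> (i + j)"
  by (simp add: lift_point_def funpow_add)

context
  fixes f :: "z2 poly" and n :: nat and \<sigma> :: "int list"
  assumes cycle: "is_cycle f n \<sigma>"
begin

private abbreviation "k \<equiv> length \<sigma>"
private abbreviation "g \<equiv> fn_map f (Suc n)"
private abbreviation "p \<equiv> lift_point f n \<sigma>"

lemma lift_point_bounds: "0 \<le> p j" "p j < 2 ^ Suc n"
proof -
  have "0 \<le> p j \<and> p j < 2 ^ Suc n"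
  proof (cases j)
    case 0
    have "(2::int) ^ n < 2 ^ Suc n" by simp
    with 0 show ?thesis
      using cycle_nth_bounds[OF cycle cycle_length_pos[OF cycle]] by (simp add: lift_point_def)
  next
    case (Suc i)
    then show ?thesis using fn_map_bounds[of f "Suc n"] by (simp add: lift_point_def)
  qed
  then show "0 \<le> p j" "p j < 2 ^ Suc n" by simp_all
qed

lemma lift_point_mod: "p j mod 2 ^ n = \<sigma> ! (j mod k)"
  using funpow_fn_map_mod[of n "Suc n"] cycle_nth_bounds[OF cycle cycle_length_pos[OF cycle]]
  by (simp add: lift_point_def cycle_funpow_nth[OF cycle])

lemma lift_point_mod_mem: "p j mod 2 ^ n \<in> set \<sigma>"
  using cycle_length_pos[OF cycle] by (simp add: lift_point_mod)

context
  assumes grows: "grows f n \<sigma>"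
begin

lemma lift_point_fiber:
  assumes "0 \<le> t" "t < 2 ^ Suc n" "t mod 2 ^ n = p i mod 2 ^ n"
  shows "t = p i \<or> t = p (i + k)"
proof -
  have "p (i + k) = (g ^^ k) (p i)" by (simp add: funpow_lift_point add.commute)
  also have "\<dots> \<noteq> p i"
    using lift_point_bounds lift_point_mod_mem by (intro grows_funpow_length_no_fixpoint[OF grows])
  finally have "p (i + k) \<noteq> p i" .
  moreover have "p (i + k) mod 2 ^ n = p i mod 2 ^ n" by (simp add: lift_point_mod)
  moreover have fiber: "y = p i mod 2 ^ n \<or> y = p i mod 2 ^ n + 2 ^ n"
    if "0 \<le> y" "y < 2 ^ Suc n" "y mod 2 ^ n = p i mod 2 ^ n" for y
    using int_cases_mod_double[of y "2 ^ n"] that by simp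
  ultimately show ?thesis
    using fiber[OF assms] fiber[OF lift_point_bounds, of i] fiber[OF lift_point_bounds, of "i + k"]
    by auto
qed

lemma lift_point_period: "p (j + 2 * k) = p j"
proof -
  have "p (2 * k) = (g ^^ k) (p k)" by (simp add: funpow_lift_point mult_2)
  also have "\<dots> \<noteq> p k"
    using lift_point_bounds lift_point_mod_mem by (intro grows_funpow_length_no_fixpoint[OF grows])
  finally have "p (2 * k) \<noteq> p (0 + k)" by simp
  moreover have "p (2 * k) mod 2 ^ n = p 0 mod 2 ^ n" by (simp add: lift_point_mod)
  ultimately have "p (2 * k) = p 0" using lift_point_fiber lift_point_bounds by blast
  then show ?thesis
    using funpow_lift_point[of j f n \<sigma> "2 * k"] funpow_lift_point[of j f n \<sigma> 0] by simp
qed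

lemma lift_point_mod_period: "p j = p (j mod (2 * k))"
proof -
  have "p (i + q * (2 * k)) = p i" for i q
    by (induction q) (simp_all add: lift_point_period add.assoc[symmetric] add.commute[of "2 * k"])
  then show ?thesis by (metis mod_div_mult_eq)
qed

lemma lift_point_inj:
  assumes "i < j" "j < 2 * k"
  shows "p i \<noteq> p j"
proof (cases "i mod k = j mod k")
  case True
  then have "j = i + k" using assms nat_mod_eq_less_double by blast
  then have "p j = (g ^^ k) (p i)" by (simp add: funpow_lift_point add.commute)
  also have "\<dots> \<noteq> p i"
    using lift_point_bounds lift_point_mod_mem by (intro grows_funpow_length_no_fixpoint[OF grows])
  finally show ?thesis by simp
next
  case False
  then have "\<sigma> ! (i mod k) \<noteq> \<sigma> ! (j mod k)"
    using cycle cycle_length_pos[OF cycle] by (simp add: is_cycle_def nth_eq_iff_index_eq)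
  then show ?thesis by (metis lift_point_mod)
qed

lemma set_lift_orbit: "set (lift_orbit f n \<sigma>) = {t. 0 \<le> t \<and> t < 2 ^ Suc n \<and> t mod 2 ^ n \<in> set \<sigma>}"
proof (intro equalityI subsetI)
  fix t assume "t \<in> {t. 0 \<le> t \<and> t < 2 ^ Suc n \<and> t mod 2 ^ n \<in> set \<sigma>}"
  then have t: "0 \<le> t" "t < 2 ^ Suc n" "t mod 2 ^ n \<in> set \<sigma>" by simp_all
  then obtain i where "i < k" "t mod 2 ^ n = p i mod 2 ^ n"
    by (auto simp: in_set_conv_nth lift_point_mod)
  with t have "t = p i \<or> t = p (i + k)" by (intro lift_point_fiber)
  with \<open>i < k\<close> show "t \<in> set (lift_orbit f n \<sigma>)" by (auto simp: lift_orbit_def)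
qed (use lift_point_bounds in \<open>auto simp: lift_orbit_def lift_point_mod_mem\<close>)

lemma is_lift_lift_orbit: "is_lift f n \<sigma> (lift_orbit f n \<sigma>)"
  unfolding is_lift_def is_cycle_def
proof (intro conjI ballI allI impI)
  show "lift_orbit f n \<sigma> \<noteq> []" using cycle_length_pos[OF cycle] by (simp add: lift_orbit_def)
  show "distinct (lift_orbit f n \<sigma>)"
    unfolding lift_orbit_def distinct_conv_nth
    by (auto dest: lift_point_inj simp: nat_neq_iff)
  show "set (lift_orbit f n \<sigma>) \<subseteq> {0..<2 ^ Suc n}" by (auto simp: set_lift_orbit)
  fix i assume "i < length (lift_orbit f n \<sigma>)"
  then show "g (lift_orbit f n \<sigma> ! i) = lift_orbit f n \<sigma> ! ((i + 1) mod length (lift_orbit f n \<sigma>))"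
    using funpow_lift_point[of 1 f n \<sigma> i] lift_point_mod_period[of "Suc i"]
      cycle_length_pos[OF cycle] by (simp add: lift_orbit_def)
qed (simp add: set_lift_orbit)

lemma lift_unique:
  assumes "is_lift f n \<sigma> \<tau>"
  shows "set \<tau> = set (lift_orbit f n \<sigma>)"
proof
  have \<tau>: "is_cycle f (Suc n) \<tau>" using assms by (simp add: is_lift_def)
  show sub: "set \<tau> \<subseteq> set (lift_orbit f n \<sigma>)"
    using assms by (auto simp: is_lift_def is_cycle_def set_lift_orbit)
  have "\<tau> ! 0 \<in> set \<tau>" using \<tau> by (simp add: is_cycle_def)
  then obtain i where "i < 2 * k" and i: "p i \<in> set \<tau>" using sub by (auto simp: lift_orbit_def)
  have orbit: "p (j + i) \<in> set \<tau>" for j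
  proof (induction j)
    case (Suc j)
    then have "g (p (j + i)) \<in> set \<tau>" by (rule cycle_fn_map_closed[OF \<tau>])
    then show ?case using funpow_lift_point[of 1 f n \<sigma> "j + i"] by simp
  qed (simp add: i)
  show "set (lift_orbit f n \<sigma>) \<subseteq> set \<tau>"
  proof
    fix t assume "t \<in> set (lift_orbit f n \<sigma>)"
    then obtain m where "t = p m" by (auto simp: lift_orbit_def)
    also have "\<dots> = p ((m + 2 * k - i) + i)"
      using \<open>i < 2 * k\<close> lift_point_period[of m] by simp
    finally show "t \<in> set \<tau>" using orbit by simp
  qed
qed

end

end

lemma red_mem_of_lift: "is_lift f n \<sigma> \<tau> \<Longrightarrow> red (Suc n) x \<in> set \<tau> \<Longrightarrow> red n x \<in> set \<sigma>"
  by (auto simp: is_lift_def red_mod_le)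

lemma length_lift_orbit: "length (lift_orbit f n \<sigma>) = 2 * length \<sigma>"
  by (simp add: lift_orbit_def)

lemma poly_pcompose_self_displacement:
  fixes G :: "'a::idom poly"
  assumes "poly G x - x = h"
  shows "\<exists>c. poly (pcompose G G) x - x = h * (1 + poly (pderiv G) x) + h ^ 2 * c"
proof -
  obtain c where c: "poly G (x + h) = poly G x + h * poly (pderiv G) x + h ^ 2 * c"
    using poly_add_second_order by blast
  have "poly (pcompose G G) x = poly G (x + h)"
    using assms by (simp add: poly_pcompose algebra_simps)
  with c assms show ?thesis by (auto simp: algebra_simps)
qed

lemma iter_poly_double_invariants:
  assumes n: "2 \<le> n"
    and disp: "poly (iter_poly f k) x - x = 2 ^ n * b"
    and a: "a_val f k x = 1 + 2 * v"
  shows "4 dvd a_val f (2 * k) x - 1"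
    and "\<exists>e. b_val f (Suc n) (2 * k) x = b * (1 + v) + 2 * e"
proof -
  define G where "G = iter_poly f k"
  have double: "iter_poly f (2 * k) = pcompose G G" by (simp add: G_def iter_poly_add mult_2)
  have A: "poly (pderiv G) x = 1 + 2 * v" using a by (simp add: a_val_def deriv_at_eq_poly_pderiv G_def)
  have "(4::z2) dvd 2 ^ n" using le_imp_power_dvd[OF n, where a = "2::z2"] by simp
  then have "4 dvd poly G x - x" using disp by (simp add: G_def dvd_mult2)
  then have "4 dvd poly (pderiv G) (poly G x) - poly (pderiv G) x"
    using sub_dvd_poly_diff dvd_trans by blast
  then obtain t where t: "poly (pderiv G) (poly G x) = 1 + 2 * v + 4 * t"
    by (auto simp: dvd_def A algebra_simps)
  have "a_val f (2 * k) x = poly (pderiv G) (poly G x) * poly (pderiv G) x"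
    by (simp add: a_val_def deriv_at_eq_poly_pderiv double pderiv_pcompose poly_pcompose)
  then have "a_val f (2 * k) x - 1 = 4 * (v + v ^ 2 + t + 2 * t * v)"
    by (simp add: t A algebra_simps power2_eq_square)
  then show "4 dvd a_val f (2 * k) x - 1" by (simp only: dvd_triv_left)
  obtain c where c: "poly (pcompose G G) x - x = 2 ^ n * b * (1 + poly (pderiv G) x) + (2 ^ n * b) ^ 2 * c"
    using poly_pcompose_self_displacement disp G_def by blast
  obtain N where N: "n = N + 2" using n by (metis add.commute le_Suc_ex)
  have "poly (pcompose G G) x - x = 2 ^ Suc n * (b * (1 + v) + 2 * (2 ^ N * b ^ 2 * c))"
    unfolding c A N by (simp add: power_add power2_eq_square algebra_simps)
  then have "poly (iter_poly f (2 * k)) x - x = 2 ^ Suc n * (b * (1 + v) + 2 * (2 ^ N * b ^ 2 * c))"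
    by (simp only: double)
  then have "b_val f (Suc n) (2 * k) x = b * (1 + v) + 2 * (2 ^ N * b ^ 2 * c)"
    by (rule b_val_eqI)
  then show "\<exists>e. b_val f (Suc n) (2 * k) x = b * (1 + v) + 2 * e" ..
qed

lemma strongly_grows_imp_grows: "strongly_grows f n \<sigma> \<Longrightarrow> grows f n \<sigma>"
  by (simp add: strongly_grows_def grows_def)

lemma weakly_grows_imp_grows: "weakly_grows f n \<sigma> \<Longrightarrow> grows f n \<sigma>"
  by (simp add: weakly_grows_def grows_def)

lemma strongly_grows_lift_orbit:
  assumes cycle: "is_cycle f n \<sigma>" and n: "2 \<le> n" and sg: "strongly_grows f n \<sigma>"
  shows "strongly_grows f (Suc n) (lift_orbit f n \<sigma>)"
  unfolding strongly_grows_def length_lift_orbit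
proof (intro allI impI)
  fix x assume "red (Suc n) x \<in> set (lift_orbit f n \<sigma>)"
  then have x: "red n x \<in> set \<sigma>"
    using red_mem_of_lift is_lift_lift_orbit[OF cycle strongly_grows_imp_grows[OF sg]] by blast
  then obtain u where "a_val f (length \<sigma>) x - 1 = 4 * u"
    and b: "\<not> 2 dvd b_val f n (length \<sigma>) x"
    using sg by (auto simp: strongly_grows_def dvd_def)
  then have "a_val f (length \<sigma>) x = 1 + 2 * (2 * u)" by (simp add: algebra_simps)
  from iter_poly_double_invariants[OF n cycle_displacement[OF cycle x] this]
  obtain e where "4 dvd a_val f (2 * length \<sigma>) x - 1"
    and "b_val f (Suc n) (2 * length \<sigma>) x = b_val f n (length \<sigma>) x * (1 + 2 * u) + 2 * e"
    by blast
  with b show "4 dvd a_val f (2 * length \<sigma>) x - 1 \<and> \<not> 2 dvd b_val f (Suc n) (2 * length \<sigma>) x"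
    by (simp add: dvd_add_left_iff two_dvd_mult_iff not_two_dvd_one)
qed

lemma strongly_splits_lift_orbit:
  assumes cycle: "is_cycle f n \<sigma>" and n: "2 \<le> n" and wg: "weakly_grows f n \<sigma>"
  shows "strongly_splits f (Suc n) (lift_orbit f n \<sigma>)"
  unfolding strongly_splits_def length_lift_orbit
proof (intro allI impI)
  fix x assume "red (Suc n) x \<in> set (lift_orbit f n \<sigma>)"
  then have x: "red n x \<in> set \<sigma>"
    using red_mem_of_lift is_lift_lift_orbit[OF cycle weakly_grows_imp_grows[OF wg]] by blast
  then obtain u where "a_val f (length \<sigma>) x - 3 = 4 * u"
    using wg by (auto simp: weakly_grows_def dvd_def)
  then have "a_val f (length \<sigma>) x = 1 + 2 * (1 + 2 * u)" by (simp add: algebra_simps)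
  from iter_poly_double_invariants[OF n cycle_displacement[OF cycle x] this]
  obtain e where "4 dvd a_val f (2 * length \<sigma>) x - 1"
    and "b_val f (Suc n) (2 * length \<sigma>) x = 2 * (b_val f n (length \<sigma>) x * (1 + u) + e)"
    by (auto simp: algebra_simps)
  then show "4 dvd a_val f (2 * length \<sigma>) x - 1 \<and> 2 dvd b_val f (Suc n) (2 * length \<sigma>) x"
    by simp
qed

theorem proposition3p1:
  fixes f :: "z2 poly" and n :: nat and \<sigma> :: "int list"
  assumes "n \<ge> 2" and "is_cycle f n \<sigma>"
  shows "(strongly_grows f n \<sigma> \<longrightarrow>
           (\<exists>\<tau>. is_lift f n \<sigma> \<tau> \<and> (\<forall>\<tau>'. is_lift f n \<sigma> \<tau>' \<longrightarrow> set \<tau>' = set \<tau>)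
                \<and> strongly_grows f (Suc n) \<tau>))
       \<and> (weakly_grows f n \<sigma> \<longrightarrow>
           (\<exists>\<tau>. is_lift f n \<sigma> \<tau> \<and> (\<forall>\<tau>'. is_lift f n \<sigma> \<tau>' \<longrightarrow> set \<tau>' = set \<tau>)
                \<and> strongly_splits f (Suc n) \<tau>))"
proof -
  have unique_lift: "is_lift f n \<sigma> (lift_orbit f n \<sigma>)
      \<and> (\<forall>\<tau>'. is_lift f n \<sigma> \<tau>' \<longrightarrow> set \<tau>' = set (lift_orbit f n \<sigma>))" if "grows f n \<sigma>"
    using is_lift_lift_orbit lift_unique assms(2) that by blast
  show ?thesis
    using unique_lift strongly_grows_imp_grows weakly_grows_imp_grows
      strongly_grows_lift_orbit[OF assms(2,1)] strongly_splits_lift_orbit[OF assms(2,1)]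
    by blast
qed

end
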